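(* Let $B_1$ and $B_2$ be finite Blaschke products of degrees $M$ and $N$ respectively, and let $0<r<1$. If $|B_1(z)|=|B_2(z)|$ for more than $2N+2M-1$ distinct points $z\in r\mathbb{T}$, then $B_2$ is a constant multiple of $B_1$.
   Context: $r\mathbb{T}=\{z\in\mathbb{C}:|z|=r\}$. A finite Blaschke product of degree $M$ is a function $c\prod_{j=1}^M\frac{z-\alpha_j}{1-\overline{\alpha_j}z}$ with $|c|=1$ and $\alpha_j$ in the open unit disc. *)

theory Defs
  imports "HOL-Analysis.Analysis"
begin

text \<open>Finite Blaschke product with unimodular constant c and zeros listed (with multiplicity)
  in the list as; its degree is the length of the list.\<close>
definition blaschke :: "complex \<Rightarrow> complex list \<Rightarrow> complex \<Rightarrow> complex" where
  "blaschke c as z = c * (\<Prod>a\<leftarrow>as. (z - a) / (1 - cnj a * z))"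

definition is_blaschke :: "nat \<Rightarrow> (complex \<Rightarrow> complex) \<Rightarrow> bool" where
  "is_blaschke M B \<longleftrightarrow> (\<exists>c as. norm c = 1 \<and> length as = M \<and> (\<forall>a\<in>set as. norm a < 1)
      \<and> B = blaschke c as)"

end

theory Submission
  imports Defs "HOL-Computational_Algebra.Polynomial"
begin

(* On the circle |z| = r one has cnj z = r^2 / z, so there |B(z)|^2 is the value of a rational
   function P/Q whose numerator and denominator are polynomials of degree at most 2M with the same
   coefficient at z^(2M). Equality of |B1| and |B2| at 2M + 2N points therefore forces the
   polynomial identity P1 Q2 = P2 Q1. In the disc |y| < r^2, the zeros of P are the zeros a of B
   and those of Q are the points r^2 a; comparing multiplicities at a nonzero point of minimal
   modulus where the zero counts of B1 and B2 would differ shows that they have the same nonzero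
   zeros. The multiplicities of the zero at 0 agree because they are read off from |z|^k on the
   circle, and then B2 / B1 is constant. *)

lemma coeff_mult_degree_bound:
  fixes p q :: "'a::comm_semiring_0 poly"
  assumes "degree p \<le> m" "degree q \<le> n"
  shows "coeff (p * q) (m + n) = coeff p m * coeff q n"
proof -
  have "coeff p i * coeff q (m + n - i) = (if i = m then coeff p m * coeff q n else 0)" for i
    using assms by (cases i m rule: linorder_cases) (auto simp: coeff_eq_0)
  then show ?thesis by (simp add: coeff_mult)
qed

lemma degree_prod_list_le_uniform:
  assumes "\<forall>x\<in>set xs. degree (f x) \<le> d"
  shows "degree (\<Prod>x\<leftarrow>xs. f x) \<le> d * length xs"
  using assms by (induction xs) (auto intro: degree_mult_le[THEN order_trans])

lemma coeff_prod_list_uniform: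
  fixes f :: "'b \<Rightarrow> 'a::comm_semiring_1 poly"
  assumes "\<forall>x\<in>set xs. degree (f x) \<le> d"
  shows "coeff (\<Prod>x\<leftarrow>xs. f x) (d * length xs) = (\<Prod>x\<leftarrow>xs. coeff (f x) d)"
  using assms
proof (induction xs)
  case (Cons x xs)
  then show ?case
    using coeff_mult_degree_bound[of "f x" d "\<Prod>x\<leftarrow>xs. f x" "d * length xs"]
      degree_prod_list_le_uniform[of xs f d] by simp
qed simp

lemma poly_prod_list_map: "poly (\<Prod>x\<leftarrow>xs. f x) y = (\<Prod>x\<leftarrow>xs. poly (f x) y)"
  by (induction xs) simp_all

lemma order_linear_factor: "order y [:-a, 1:] = (if y = a then 1 else 0)"
  using order_power_n_n[of a 1] by (auto intro: order_0I)

lemma one_minus_cnj_mult_nonzero: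
  fixes a z :: complex
  assumes "norm a < 1" "norm z \<le> 1"
  shows "1 - cnj a * z \<noteq> 0"
proof -
  have "norm (cnj a * z) \<le> norm a"
    using assms mult_left_le[of "norm z" "norm a"] by (simp add: norm_mult)
  then have "norm (cnj a * z) < 1" using assms(1) by linarith
  then show ?thesis by auto
qed

lemma blaschke_Cons: "blaschke c (a # as) z = (z - a) / (1 - cnj a * z) * blaschke c as z"
  by (simp add: blaschke_def)

lemma blaschke_scale: "blaschke c as z = c * blaschke 1 as z"
  by (simp add: blaschke_def)

lemma blaschke_mset_cong: "mset as = mset bs \<Longrightarrow> blaschke c as = blaschke c bs"
  by (simp add: blaschke_def fun_eq_iff flip: prod_mset_prod_list)

lemma blaschke_split_zeros:
  "blaschke c as z = blaschke c (filter (\<lambda>a. a \<noteq> 0) as) z * z ^ count (mset as) 0"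
  by (induction as) (auto simp: blaschke_Cons mult_ac)

lemma blaschke_eq_0_iff:
  assumes "c \<noteq> 0" "norm z < 1" "\<forall>a\<in>set as. norm a < 1"
  shows "blaschke c as z = 0 \<longleftrightarrow> z \<in> set as"
  using assms one_minus_cnj_mult_nonzero[of _ z] by (auto simp: blaschke_def prod_list_zero_iff)

definition sqnorm_num :: "real \<Rightarrow> complex list \<Rightarrow> complex poly" where
  "sqnorm_num R as = (\<Prod>a\<leftarrow>as. [:-a, 1:] * [:of_real R, - cnj a:])"

definition sqnorm_den :: "real \<Rightarrow> complex list \<Rightarrow> complex poly" where
  "sqnorm_den R as = (\<Prod>a\<leftarrow>as. [:1, - cnj a:] * [:- (a * of_real R), 1:])"

lemma sqnorm_num_Cons:
  "sqnorm_num R (a # as) = [:-a, 1:] * [:of_real R, - cnj a:] * sqnorm_num R as"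
  by (simp add: sqnorm_num_def)

lemma sqnorm_den_Cons:
  "sqnorm_den R (a # as) = [:1, - cnj a:] * [:- (a * of_real R), 1:] * sqnorm_den R as"
  by (simp add: sqnorm_den_def)

lemma sqnorm_num_nonzero: "R \<noteq> 0 \<Longrightarrow> sqnorm_num R as \<noteq> 0"
  by (auto simp: sqnorm_num_def prod_list_zero_iff)

lemma sqnorm_den_nonzero: "sqnorm_den R as \<noteq> 0"
  by (auto simp: sqnorm_den_def prod_list_zero_iff)

lemma sqnorm_num_top_coeff:
  "degree (sqnorm_num R as) \<le> 2 * length as"
  "coeff (sqnorm_num R as) (2 * length as) = (\<Prod>a\<leftarrow>as. - cnj a)"
proof -
  have deg: "\<forall>a\<in>set as. degree ([:-a, 1:] * [:of_real R, - cnj a:]) \<le> 2"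
    by (auto intro: degree_mult_le[THEN order_trans])
  have top: "(\<Prod>a\<leftarrow>as. coeff ([:-a, 1:] * [:of_real R, - cnj a:]) 2)
      = (\<Prod>a\<leftarrow>as. - cnj a)"
    by (simp add: coeff_mult numeral_2_eq_2)
  show "degree (sqnorm_num R as) \<le> 2 * length as"
    unfolding sqnorm_num_def by (rule degree_prod_list_le_uniform[OF deg])
  show "coeff (sqnorm_num R as) (2 * length as) = (\<Prod>a\<leftarrow>as. - cnj a)"
    unfolding sqnorm_num_def coeff_prod_list_uniform[OF deg] by (rule top)
qed

lemma sqnorm_den_top_coeff:
  "degree (sqnorm_den R as) \<le> 2 * length as"
  "coeff (sqnorm_den R as) (2 * length as) = (\<Prod>a\<leftarrow>as. - cnj a)"
proof -
  have deg: "\<forall>a\<in>set as. degree ([:1, - cnj a:] * [:- (a * of_real R), 1:]) \<le> 2"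
    by (auto intro: degree_mult_le[THEN order_trans])
  have top: "(\<Prod>a\<leftarrow>as. coeff ([:1, - cnj a:] * [:- (a * of_real R), 1:]) 2)
      = (\<Prod>a\<leftarrow>as. - cnj a)"
    by (simp add: coeff_mult numeral_2_eq_2)
  show "degree (sqnorm_den R as) \<le> 2 * length as"
    unfolding sqnorm_den_def by (rule degree_prod_list_le_uniform[OF deg])
  show "coeff (sqnorm_den R as) (2 * length as) = (\<Prod>a\<leftarrow>as. - cnj a)"
    unfolding sqnorm_den_def coeff_prod_list_uniform[OF deg] by (rule top)
qed

lemma poly_sqnorm_num:
  "poly (sqnorm_num R as) z = (\<Prod>a\<leftarrow>as. (z - a) * (of_real R - cnj a * z))"
proof -
  have "poly ([:-a, 1:] * [:of_real R, - cnj a:]) z = (z - a) * (of_real R - cnj a * z)" for a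
    by (simp add: algebra_simps)
  then show ?thesis by (simp only: sqnorm_num_def poly_prod_list_map)
qed

lemma poly_sqnorm_den:
  "poly (sqnorm_den R as) z = (\<Prod>a\<leftarrow>as. (1 - cnj a * z) * (z - a * of_real R))"
proof -
  have "poly ([:1, - cnj a:] * [:- (a * of_real R), 1:]) z
      = (1 - cnj a * z) * (z - a * of_real R)" for a
    by (simp add: algebra_simps)
  then show ?thesis by (simp only: sqnorm_den_def poly_prod_list_map)
qed

lemma norm_moebius_sq_on_circle:
  fixes z a :: complex
  assumes "z \<noteq> 0" "norm z ^ 2 = R"
  shows "of_real (norm ((z - a) / (1 - cnj a * z)) ^ 2)
    = ((z - a) * (of_real R - cnj a * z)) / ((1 - cnj a * z) * (z - a * of_real R))"
proof -
  have cnj_z: "cnj z = of_real R / z"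
    using assms complex_norm_square[of z] by (simp add: field_simps)
  have "of_real (norm ((z - a) / (1 - cnj a * z)) ^ 2)
      = (z - a) / (1 - cnj a * z) * ((cnj z - cnj a) / (1 - a * cnj z))"
    unfolding complex_norm_square by simp
  also have "(cnj z - cnj a) / (1 - a * cnj z)
      = ((of_real R - cnj a * z) / z) / ((z - a * of_real R) / z)"
    unfolding cnj_z using assms(1) by (simp add: diff_divide_distrib)
  also have "\<dots> = (of_real R - cnj a * z) / (z - a * of_real R)"
    using assms(1) by simp
  finally show ?thesis by simp
qed

lemma blaschke_sqnorm_on_circle:
  assumes "z \<noteq> 0" "norm z ^ 2 = R" "norm c = 1"
  shows "of_real (norm (blaschke c as z) ^ 2)
    = poly (sqnorm_num R as) z / poly (sqnorm_den R as) z"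
proof (induction as)
  case Nil
  then show ?case using assms(3) by (simp add: blaschke_def poly_sqnorm_num poly_sqnorm_den)
next
  case (Cons a as)
  have "of_real (norm (blaschke c (a # as) z) ^ 2)
      = of_real (norm ((z - a) / (1 - cnj a * z)) ^ 2) * of_real (norm (blaschke c as z) ^ 2)"
    by (simp only: blaschke_Cons norm_mult power_mult_distrib of_real_mult)
  also have "\<dots> = poly (sqnorm_num R (a # as)) z / poly (sqnorm_den R (a # as)) z"
    unfolding Cons norm_moebius_sq_on_circle[OF assms(1,2)] poly_sqnorm_num poly_sqnorm_den
    by simp
  finally show ?case .
qed

lemma poly_sqnorm_den_nonzero:
  assumes "z \<noteq> 0" "norm z < 1" "norm z ^ 2 = R" "\<forall>a\<in>set as. norm a < 1"
  shows "poly (sqnorm_den R as) z \<noteq> 0"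
proof -
  have "(1 - cnj a * z) * (z - a * of_real R) \<noteq> 0" if "norm a < 1" for a
  proof -
    have "0 < R" using assms(1,3) by auto
    then have "norm (a * of_real R) < R"
      using that by (simp add: norm_mult)
    also have "R < norm z"
      using assms(1-3) by (auto simp: power2_eq_square intro: mult_less_cancel_right1[THEN iffD2])
    finally have "z - a * of_real R \<noteq> 0" by auto
    then show ?thesis using one_minus_cnj_mult_nonzero[OF that] assms(2) by simp
  qed
  then show ?thesis
    using assms(4) by (auto simp: poly_sqnorm_den prod_list_zero_iff)
qed

lemma sqnorm_cross_eq_if_norm_eq:
  assumes as: "\<forall>a\<in>set as. norm a < 1" and bs: "\<forall>b\<in>set bs. norm b < 1"
    and "norm c1 = 1" "norm c2 = 1" "0 < r" "r < 1" "S \<subseteq> sphere 0 r"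
    and "2 * length as + 2 * length bs \<le> card S"
    and eq: "\<forall>z\<in>S. norm (blaschke c1 as z) = norm (blaschke c2 bs z)"
  shows "sqnorm_num (r\<^sup>2) as * sqnorm_den (r\<^sup>2) bs
    = sqnorm_num (r\<^sup>2) bs * sqnorm_den (r\<^sup>2) as"
proof (rule poly_eqI_degree_lead_coeff[where n = "2 * length as + 2 * length bs" and A = S])
  note top = sqnorm_num_top_coeff[of "r\<^sup>2"] sqnorm_den_top_coeff[of "r\<^sup>2"]
  show "coeff (sqnorm_num (r\<^sup>2) as * sqnorm_den (r\<^sup>2) bs) (2 * length as + 2 * length bs)
      = coeff (sqnorm_num (r\<^sup>2) bs * sqnorm_den (r\<^sup>2) as) (2 * length as + 2 * length bs)"
    using coeff_mult_degree_bound[OF top(1)[of as] top(3)[of bs]]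
      coeff_mult_degree_bound[OF top(1)[of bs] top(3)[of as]] top(2,4)
    by (simp add: add.commute mult.commute)
  show "degree (sqnorm_num (r\<^sup>2) as * sqnorm_den (r\<^sup>2) bs) \<le> 2 * length as + 2 * length bs"
    "degree (sqnorm_num (r\<^sup>2) bs * sqnorm_den (r\<^sup>2) as) \<le> 2 * length as + 2 * length bs"
    using degree_mult_le[of "sqnorm_num (r\<^sup>2) as" "sqnorm_den (r\<^sup>2) bs"]
      degree_mult_le[of "sqnorm_num (r\<^sup>2) bs" "sqnorm_den (r\<^sup>2) as"]
      top(1,3)[of as] top(1,3)[of bs]
    by linarith+
  show "2 * length as + 2 * length bs \<le> card S" by fact
  fix z assume "z \<in> S"
  then have z: "z \<noteq> 0" "norm z < 1" "norm z ^ 2 = r\<^sup>2" using assms by auto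
  have "of_real (norm (blaschke c1 as z) ^ 2) = (of_real (norm (blaschke c2 bs z) ^ 2) :: complex)"
    using eq \<open>z \<in> S\<close> by simp
  then have "poly (sqnorm_num (r\<^sup>2) as) z / poly (sqnorm_den (r\<^sup>2) as) z
      = poly (sqnorm_num (r\<^sup>2) bs) z / poly (sqnorm_den (r\<^sup>2) bs) z"
    unfolding blaschke_sqnorm_on_circle[OF z(1,3) assms(3)]
      blaschke_sqnorm_on_circle[OF z(1,3) assms(4)] .
  then show "poly (sqnorm_num (r\<^sup>2) as * sqnorm_den (r\<^sup>2) bs) z
      = poly (sqnorm_num (r\<^sup>2) bs * sqnorm_den (r\<^sup>2) as) z"
    using poly_sqnorm_den_nonzero[OF z as] poly_sqnorm_den_nonzero[OF z bs]
    by (simp add: field_simps)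
qed

lemma order_sqnorm_num:
  assumes "\<forall>a\<in>set as. norm a < 1" "norm y < R"
  shows "order y (sqnorm_num R as) = count (mset as) y"
  using assms(1)
proof (induction as)
  case (Cons a as)
  have "R \<noteq> 0" using assms(2) by auto
  have "norm (cnj a * y) < norm (of_real R :: complex)"
    using Cons.prems assms(2) mult_left_le_one_le[of "norm y" "norm a"] by (simp add: norm_mult)
  then have "cnj a * y \<noteq> of_real R" by auto
  then have "poly [:of_real R, - cnj a:] y \<noteq> 0" by (simp add: mult.commute)
  have factor: "[:-a, 1:] * [:of_real R, - cnj a:] \<noteq> 0"
    using \<open>R \<noteq> 0\<close> by (simp only: mult_eq_0_iff pCons_eq_0_iff) simp
  then have "order y (sqnorm_num R (a # as))
      = order y ([:-a, 1:] * [:of_real R, - cnj a:]) + order y (sqnorm_num R as)"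
    unfolding sqnorm_num_Cons
    by (intro order_mult no_zero_divisors[OF factor] sqnorm_num_nonzero \<open>R \<noteq> 0\<close>)
  also have "\<dots> = (if y = a then 1 else 0) + count (mset as) y"
    unfolding order_mult[OF factor]
    using Cons \<open>poly [:of_real R, - cnj a:] y \<noteq> 0\<close> by (simp add: order_linear_factor order_0I)
  finally show ?case by simp
qed (simp add: sqnorm_num_def)

lemma order_sqnorm_den:
  assumes "\<forall>a\<in>set as. norm a < 1" "norm y < R" "R \<le> 1"
  shows "order y (sqnorm_den R as) = count (mset as) (y / of_real R)"
  using assms(1)
proof (induction as)
  case (Cons a as)
  have "poly [:1, - cnj a:] y \<noteq> 0"
    using one_minus_cnj_mult_nonzero[of a y] Cons.prems assms(2,3) by (simp add: mult.commute)
  have factor: "[:1, - cnj a:] * [:- (a * of_real R), 1:] \<noteq> 0"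
    by (simp only: mult_eq_0_iff pCons_eq_0_iff) simp
  then have "order y (sqnorm_den R (a # as))
      = order y ([:1, - cnj a:] * [:- (a * of_real R), 1:]) + order y (sqnorm_den R as)"
    unfolding sqnorm_den_Cons by (intro order_mult no_zero_divisors[OF factor] sqnorm_den_nonzero)
  also have "\<dots> = (if y = a * of_real R then 1 else 0) + count (mset as) (y / of_real R)"
    unfolding order_mult[OF factor]
    using Cons \<open>poly [:1, - cnj a:] y \<noteq> 0\<close> by (simp add: order_linear_factor order_0I)
  moreover have "y = a * of_real R \<longleftrightarrow> y / of_real R = a"
    using assms(2) by (auto simp: field_simps)
  ultimately show ?case by auto
qed (simp add: sqnorm_den_def)

lemma count_eq_from_scaled_balance:
  fixes A B :: "complex multiset" and R :: real
  assumes "\<forall>a\<in>#A. norm a < 1" "\<forall>b\<in>#B. norm b < 1" "0 < R" "R < 1"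
    and balance: "\<And>y. 0 < norm y \<Longrightarrow> norm y < R \<Longrightarrow>
      count A y + count B (y / of_real R) = count B y + count A (y / of_real R)"
    and "x \<noteq> 0"
  shows "count A x = count B x"
proof (rule ccontr)
  assume "count A x \<noteq> count B x"
  define T where "T = {u \<in> set_mset (A + B). u \<noteq> 0 \<and> count A u \<noteq> count B u}"
  have "x \<in> T"
    unfolding T_def using \<open>count A x \<noteq> count B x\<close> \<open>x \<noteq> 0\<close> by (auto simp: not_in_iff)
  moreover have "finite T" unfolding T_def by simp
  \<comment> \<open>For a counterexample m of minimal modulus, the balance at y = R m involves the
    counts at y, which agree by minimality, and at m.\<close>
  ultimately obtain m where "m \<in> T" and min: "\<not> (\<exists>u\<in>T. norm u < norm m)"
    using arg_min_if_finite[of T norm] by blast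
  then have m: "m \<noteq> 0" "norm m < 1" "count A m \<noteq> count B m"
    using assms(1,2) unfolding T_def by auto
  define y where "y = of_real R * m"
  have y: "0 < norm y" "norm y < norm m" "norm y < R" "y / of_real R = m"
    using m assms(3,4) by (auto simp: y_def norm_mult)
  then have "y \<notin> T" using min by blast
  then have "count A y = count B y"
    unfolding T_def using \<open>0 < norm y\<close> by (auto simp: not_in_iff)
  then show False using balance[OF y(1,3)] y(4) m(3) by simp
qed

lemma nonzero_zeros_eq_if_sqnorm_cross_eq:
  assumes as: "\<forall>a\<in>set as. norm a < 1" and bs: "\<forall>b\<in>set bs. norm b < 1"
    and "0 < R" "R < 1" and cross: "sqnorm_num R as * sqnorm_den R bs = sqnorm_num R bs * sqnorm_den R as"
  shows "filter_mset (\<lambda>a. a \<noteq> 0) (mset as) = filter_mset (\<lambda>a. a \<noteq> 0) (mset bs)"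
proof (rule multiset_eqI)
  fix x
  have "count (mset as) x = count (mset bs) x" if "x \<noteq> 0"
  proof (rule count_eq_from_scaled_balance[OF _ _ \<open>0 < R\<close> \<open>R < 1\<close> _ that])
    fix y :: complex assume "0 < norm y" "norm y < R"
    then have "order y (sqnorm_num R as * sqnorm_den R bs)
        = count (mset as) y + count (mset bs) (y / of_real R)"
      "order y (sqnorm_num R bs * sqnorm_den R as)
        = count (mset bs) y + count (mset as) (y / of_real R)"
      using as bs \<open>0 < R\<close> \<open>R < 1\<close>
      by (simp_all add: order_mult sqnorm_num_nonzero sqnorm_den_nonzero
          order_sqnorm_num order_sqnorm_den)
    then show "count (mset as) y + count (mset bs) (y / of_real R)
        = count (mset bs) y + count (mset as) (y / of_real R)"
      using cross by simp
  qed (use as bs in auto)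
  then show "count (filter_mset (\<lambda>a. a \<noteq> 0) (mset as)) x
      = count (filter_mset (\<lambda>a. a \<noteq> 0) (mset bs)) x"
    by simp
qed

lemma mset_eq_if_nonzero_zeros_eq_and_norm_eq:
  assumes "norm c1 = 1" "norm c2 = 1" "\<forall>a\<in>set as. norm a < 1"
    and nonzero: "filter_mset (\<lambda>a. a \<noteq> 0) (mset as) = filter_mset (\<lambda>a. a \<noteq> 0) (mset bs)"
    and z: "0 < norm z" "norm z < 1" "z \<notin> set as"
    and eq: "norm (blaschke c1 as z) = norm (blaschke c2 bs z)"
  shows "mset as = mset bs"
proof -
  define G where "G = blaschke 1 (filter (\<lambda>a. a \<noteq> 0) as)"
  have G_bs: "blaschke 1 (filter (\<lambda>b. b \<noteq> 0) bs) = G"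
    unfolding G_def using nonzero by (intro blaschke_mset_cong) simp
  have "G z \<noteq> 0"
    unfolding G_def using z assms(3) by (subst blaschke_eq_0_iff) auto
  moreover have "norm (G z) * norm z ^ count (mset as) 0 = norm (G z) * norm z ^ count (mset bs) 0"
    using eq assms(1,2) G_bs
    by (simp add: blaschke_split_zeros[of _ as] blaschke_split_zeros[of _ bs] blaschke_scale[of c1]
        blaschke_scale[of c2] G_def norm_mult norm_power)
  ultimately have zero: "count (mset as) 0 = count (mset bs) 0"
    using z by (simp add: power_inject_exp')
  show ?thesis
  proof (rule multiset_eqI)
    fix x
    show "count (mset as) x = count (mset bs) x"
      using zero arg_cong[OF nonzero, of "\<lambda>A. count A x"] by (cases "x = 0") auto
  qed
qed


lemma mset_eq_if_blaschke_norm_eq_on_circle: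
  assumes as: "\<forall>a\<in>set as. norm a < 1" and bs: "\<forall>b\<in>set bs. norm b < 1"
    and c1: "norm c1 = 1" and c2: "norm c2 = 1"
    and r: "0 < r" "r < 1" and S: "S \<subseteq> sphere 0 r"
    and card: "2 * length as + 2 * length bs \<le> card S"
    and eq: "\<forall>z\<in>S. norm (blaschke c1 as z) = norm (blaschke c2 bs z)"
  shows "mset as = mset bs"
proof (cases "as = [] \<and> bs = []")
  case False
  have "0 < r\<^sup>2" "r\<^sup>2 < 1"
    using r by (simp_all add: power_less_one_iff)
  then have nonzero: "filter_mset (\<lambda>a. a \<noteq> 0) (mset as) = filter_mset (\<lambda>a. a \<noteq> 0) (mset bs)"
    using nonzero_zeros_eq_if_sqnorm_cross_eq[OF as bs]
      sqnorm_cross_eq_if_norm_eq[OF as bs c1 c2 r S card eq] by blast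
  from False have "0 < length as + length bs" by simp
  then have "card (set as) < card S"
    using card card_length[of as] by linarith
  then obtain z where z: "z \<in> S" "z \<notin> set as"
    using card_mono[of "set as" S] by fastforce
  then have "0 < norm z" "norm z < 1" "norm (blaschke c1 as z) = norm (blaschke c2 bs z)"
    using r S eq by auto
  then show ?thesis
    using mset_eq_if_nonzero_zeros_eq_and_norm_eq[OF c1 c2 as nonzero] z(2) by blast
qed simp

theorem theorem2p11:
  fixes B1 B2 :: "complex \<Rightarrow> complex" and M N :: nat and r :: real
    and S :: "complex set"
  assumes "is_blaschke M B1" and "is_blaschke N B2"
    and "0 < r" and "r < 1"
    and "S \<subseteq> sphere 0 r" and "finite S"
    and "int (card S) > 2 * int N + 2 * int M - 1"
    and "\<forall>z\<in>S. norm (B1 z) = norm (B2 z)"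
  shows "\<exists>c::complex. \<forall>z\<in>ball 0 1. B2 z = c * B1 z"
proof -
  obtain c1 as where c1: "norm c1 = 1" and M: "length as = M"
    and as: "\<forall>a\<in>set as. norm a < 1" and B1: "B1 = blaschke c1 as"
    using assms(1) unfolding is_blaschke_def by blast
  obtain c2 bs where c2: "norm c2 = 1" and N: "length bs = N"
    and bs: "\<forall>b\<in>set bs. norm b < 1" and B2: "B2 = blaschke c2 bs"
    using assms(2) unfolding is_blaschke_def by blast
  have "2 * length as + 2 * length bs \<le> card S"
    using assms(7) M N by linarith
  then have "mset as = mset bs"
    using mset_eq_if_blaschke_norm_eq_on_circle[OF as bs c1 c2 assms(3-5)] assms(8) B1 B2 by simp
  then have "B2 z = c2 / c1 * B1 z" for z
    using c1 blaschke_mset_cong[of bs as 1]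
    by (auto simp: B1 B2 blaschke_scale[of c1] blaschke_scale[of c2])
  then show ?thesis
    by blast
qed

end
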